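(* Let $d\ge7$, $\epsilon>0$ and $\Delta\ge\sqrt d\,\epsilon$. There exists a subset $\Theta\subseteq\{\Delta\}\times\{-\epsilon,\epsilon\}^{d-1}\subseteq\mathbb R^d$ of cardinality $|\Theta|\ge e^{(d-1)/8}\ge2$ such that for all $\theta\ne\theta'\in\Theta$, \[ \|\Phi_\theta-\Phi_{\theta'}\|_{L^1(Q_0)}\ge\frac{\sqrt{d-1}\,\epsilon}{4\pi\Delta}e^{-\Delta^2}. \]
   Context: $(\varphi_j)_{j\ge1}$ is an orthonormal basis of $\mathbb L^2([0,1])$. For $\theta\in\mathbb R^d$ let $f_\theta=\sum_{j=1}^d\theta_j\varphi_j$, and let $\Phi_\theta$ be the Bayes classifier of the model $Y\sim\mathrm{Bernoulli}(1/2)$, $dX(t)=Yf_\theta(t)\,dt+dW(t)$ (i.e. $f=f_\theta$, $g=0$, $W$ a standard Brownian motion independent of $Y$), namely $\Phi_\theta(x)=\mathbf 1\{\int_0^1f_\theta(t)\,dx(t)\ge\frac12\|\theta\|^2\}$ for continuous trajectories $x$. $Q_0$ is the law (Wiener measure) of a standard Brownian motion $W$ on $[0,1]$ and $\|h\|_{L^1(Q_0)}=\mathbb E|h(W)|$. *)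

theory Defs
  imports "HOL-Probability.Probability"
begin

definition L2_01 :: "(real \<Rightarrow> real) \<Rightarrow> bool" where
  "L2_01 f \<longleftrightarrow> f \<in> borel_measurable borel \<and> set_integrable lborel {0..1} (\<lambda>t. (f t)\<^sup>2)"

definition inner01 :: "(real \<Rightarrow> real) \<Rightarrow> (real \<Rightarrow> real) \<Rightarrow> real" where
  "inner01 f g = (LINT t:{0..1}|lborel. f t * g t)"

definition ONB_01 :: "(nat \<Rightarrow> real \<Rightarrow> real) \<Rightarrow> bool" where
  "ONB_01 \<phi> \<longleftrightarrow>
     (\<forall>j\<ge>1. L2_01 (\<phi> j)) \<and>
     (\<forall>i\<ge>1. \<forall>j\<ge>1. inner01 (\<phi> i) (\<phi> j) = (if i = j then 1 else 0)) \<and>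
     (\<forall>f. L2_01 f \<longrightarrow> (\<forall>j\<ge>1. inner01 f (\<phi> j) = 0) \<longrightarrow>
          (AE t in lborel. t \<in> {0..1} \<longrightarrow> f t = 0))"

(* Wiener integral of a standard Brownian motion W on [0,1] on the probability space M:
   I f = \<integral>_0^1 f(t) dW(t).  It is characterised (isonormal Gaussian process on L^2([0,1]))
   by a.s. linearity and I f ~ N(0, \<parallel>f\<parallel>^2). *)
definition wiener_integral :: "'a measure \<Rightarrow> ((real \<Rightarrow> real) \<Rightarrow> 'a \<Rightarrow> real) \<Rightarrow> bool" where
  "wiener_integral M I \<longleftrightarrow> prob_space M \<and>
     (\<forall>f. L2_01 f \<longrightarrow> I f \<in> borel_measurable M) \<and>
     (\<forall>f g a b. L2_01 f \<longrightarrow> L2_01 g \<longrightarrow>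
        (AE \<omega> in M. I (\<lambda>t. a * f t + b * g t) \<omega> = a * I f \<omega> + b * I g \<omega>)) \<and>
     (\<forall>f. L2_01 f \<longrightarrow> inner01 f f > 0 \<longrightarrow>
        distributed M lborel (I f) (normal_density 0 (sqrt (inner01 f f)))) \<and>
     (\<forall>f. L2_01 f \<longrightarrow> inner01 f f = 0 \<longrightarrow> (AE \<omega> in M. I f \<omega> = 0))"

(* f_theta = sum_{j=1}^d theta_j phi_j, theta \<in> R^d represented as nat \<Rightarrow> real on indices 1..d *)
definition f_theta :: "(nat \<Rightarrow> real \<Rightarrow> real) \<Rightarrow> nat \<Rightarrow> (nat \<Rightarrow> real) \<Rightarrow> real \<Rightarrow> real" where
  "f_theta \<phi> d \<theta> t = (\<Sum>j=1..d. \<theta> j * \<phi> j t)"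

definition sqnorm :: "nat \<Rightarrow> (nat \<Rightarrow> real) \<Rightarrow> real" where
  "sqnorm d \<theta> = (\<Sum>j=1..d. (\<theta> j)\<^sup>2)"

(* Bayes classifier Phi_theta evaluated at the Brownian path W(\<omega>):
   1{ \<integral> f_theta dW \<ge> \<parallel>theta\<parallel>^2/2 } *)
definition Phi_W :: "(nat \<Rightarrow> real \<Rightarrow> real) \<Rightarrow> nat \<Rightarrow> ((real \<Rightarrow> real) \<Rightarrow> 'a \<Rightarrow> real)
                      \<Rightarrow> (nat \<Rightarrow> real) \<Rightarrow> 'a \<Rightarrow> real" where
  "Phi_W \<phi> d I \<theta> \<omega> = (if I (f_theta \<phi> d \<theta>) \<omega> \<ge> sqnorm d \<theta> / 2 then 1 else 0)"

(* \<parallel>Phi_theta - Phi_theta'\<parallel>_{L^1(Q_0)} = E |Phi_theta(W) - Phi_theta'(W)| *)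
definition L1_Q0_dist :: "'a measure \<Rightarrow> (nat \<Rightarrow> real \<Rightarrow> real) \<Rightarrow> nat \<Rightarrow> ((real \<Rightarrow> real) \<Rightarrow> 'a \<Rightarrow> real)
                      \<Rightarrow> (nat \<Rightarrow> real) \<Rightarrow> (nat \<Rightarrow> real) \<Rightarrow> real" where
  "L1_Q0_dist M \<phi> d I \<theta> \<theta>' = (\<integral>\<omega>. \<bar>Phi_W \<phi> d I \<theta> \<omega> - Phi_W \<phi> d I \<theta>' \<omega>\<bar> \<partial>M)"

(* {Delta} x {-eps,eps}^{d-1} as vectors indexed 1..d (zero outside) *)
definition cube_set :: "nat \<Rightarrow> real \<Rightarrow> real \<Rightarrow> (nat \<Rightarrow> real) set" where
  "cube_set d \<Delta> \<epsilon> = {\<theta>. \<theta> 1 = \<Delta> \<and> (\<forall>j\<in>{2..d}. \<theta> j \<in> {-\<epsilon>, \<epsilon>}) \<and> (\<forall>j. j \<notin> {1..d} \<longrightarrow> \<theta> j = 0)}"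

end

theory Submission
  imports Defs
begin

text \<open>The vertices of \<open>{\<Delta>} \<times> {-\<epsilon>, \<epsilon>}\<^sup>d\<^sup>-\<^sup>1\<close> all have the same norm \<open>R\<close>, so for two of them, \<open>\<theta>\<close>
  and \<open>\<theta>'\<close>, the vectors \<open>\<theta> + \<theta>'\<close> and \<open>\<theta> - \<theta>'\<close> are orthogonal and the Wiener integrals of
  \<open>f (\<theta> + \<theta>')\<close> and \<open>f (\<theta> - \<theta>')\<close> are independent Gaussians. The two classifiers disagree as soon as the first lies in a
  window of width \<open>\<parallel>\<theta> - \<theta>'\<parallel>\<close> around \<open>R\<^sup>2\<close> and the second is not too small, which happens with
  probability of order \<open>\<parallel>\<theta> - \<theta>'\<parallel> / \<Delta> \<cdot> exp (-\<Delta>\<^sup>2)\<close>. A Gilbert--Varshamov code in the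
  hypercube, of size \<open>exp ((d - 1) / 8)\<close> and with Hamming distances above \<open>(d - 1) / 4\<close>, makes
  \<open>\<parallel>\<theta> - \<theta>'\<parallel>\<close> of order \<open>\<surd>(d - 1) \<epsilon>\<close> for all distinct code words.\<close>

section \<open>Gaussian pairs via characteristic functions\<close>

lemma (in finite_measure) integrable_abs_bounded:
  fixes f :: "'a \<Rightarrow> real"
  assumes "f \<in> borel_measurable M" and "\<And>x. \<bar>f x\<bar> \<le> c"
  shows "integrable M f"
  by (rule integrable_const_bound[where B=c]) (use assms in auto)

lemma (in finite_measure) integrable_cos_comp:
  fixes g :: "'a \<Rightarrow> real"
  assumes [measurable]: "g \<in> borel_measurable M"
  shows "integrable M (\<lambda>x. cos (g x))"
  by (rule integrable_const_bound[where B=1]) simp_all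

lemma (in finite_measure) integrable_sin_comp:
  fixes g :: "'a \<Rightarrow> real"
  assumes [measurable]: "g \<in> borel_measurable M"
  shows "integrable M (\<lambda>x. sin (g x))"
  by (rule integrable_const_bound[where B=1]) simp_all

lemma std_normal_under_density:
  fixes M :: "'a measure" and Z w :: "'a \<Rightarrow> real"
  assumes "prob_space M" and [measurable]: "Z \<in> borel_measurable M" "w \<in> borel_measurable M"
    and w_nonneg: "\<And>\<omega>. 0 \<le> w \<omega>" and w_int: "integrable M w" and w_mass: "(\<integral>\<omega>. w \<omega> \<partial>M) = 1"
    and char_cos: "\<And>t. (\<integral>\<omega>. w \<omega> * cos (t * Z \<omega>) \<partial>M) = exp (-(t\<^sup>2)/2)"
    and char_sin: "\<And>t. (\<integral>\<omega>. w \<omega> * sin (t * Z \<omega>) \<partial>M) = 0"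
    and B: "B \<in> sets borel"
  shows "(\<integral>\<omega>. w \<omega> * indicator B (Z \<omega>) \<partial>M) = measure std_normal_distribution B"
proof -
  let ?D = "density M w"
  let ?\<nu> = "distr ?D lborel Z"
  have "emeasure ?D (space ?D) = ennreal (\<integral>\<omega>. w \<omega> \<partial>M)"
    using w_int w_nonneg
    by (simp add: emeasure_density nn_integral_set_ennreal[symmetric] nn_integral_eq_integral)
  then have "prob_space ?D"
    using w_mass by (intro prob_spaceI) simp
  then have "real_distribution ?\<nu>"
    by (auto simp: real_distribution_def real_distribution_axioms_def intro: prob_space.prob_space_distr)
  moreover have "char ?\<nu> = char std_normal_distribution"
  proof
    fix t
    have int: "complex_integrable M (\<lambda>\<omega>. w \<omega> *\<^sub>R iexp (t * Z \<omega>))"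
      by (rule Bochner_Integration.integrable_bound[OF w_int]) (auto simp: w_nonneg norm_exp_i_times)
    have "char ?\<nu> t = (CLINT \<omega>|M. w \<omega> *\<^sub>R iexp (t * Z \<omega>))"
      unfolding char_def by (simp add: integral_distr integral_density w_nonneg)
    also have "\<dots> = complex_of_real (exp (-(t\<^sup>2)/2))"
      using integral_Re[OF int, symmetric] integral_Im[OF int, symmetric] char_cos[of t] char_sin[of t]
      by (intro complex_eqI) (simp_all add: Re_exp Im_exp)
    finally show "char ?\<nu> t = char std_normal_distribution t"
      by (simp add: char_std_normal_distribution)
  qed
  ultimately have "?\<nu> = std_normal_distribution"
    by (rule Levy_uniqueness[OF _ real_dist_normal_dist])
  moreover have "(\<integral>\<omega>. w \<omega> * indicator B (Z \<omega>) \<partial>M) = (\<integral>x. indicator B x \<partial>?\<nu>)"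
    using B by (subst integral_distr) (auto simp: integral_density w_nonneg)
  ultimately show ?thesis
    using B by simp
qed

lemma std_normal_under_weight:
  fixes M :: "'a measure" and Z w :: "'a \<Rightarrow> real"
  assumes "prob_space M" and [measurable]: "Z \<in> borel_measurable M" "w \<in> borel_measurable M"
    and w_nonneg: "\<And>\<omega>. 0 \<le> w \<omega>" and w_int: "integrable M w"
    and char_cos: "\<And>t. (\<integral>\<omega>. w \<omega> * cos (t * Z \<omega>) \<partial>M) = (\<integral>\<omega>. w \<omega> \<partial>M) * exp (-(t\<^sup>2)/2)"
    and char_sin: "\<And>t. (\<integral>\<omega>. w \<omega> * sin (t * Z \<omega>) \<partial>M) = 0"
    and B: "B \<in> sets borel"
  shows "(\<integral>\<omega>. w \<omega> * indicator B (Z \<omega>) \<partial>M) = (\<integral>\<omega>. w \<omega> \<partial>M) * measure std_normal_distribution B"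
proof (cases "(\<integral>\<omega>. w \<omega> \<partial>M) = 0")
  case True
  then have "AE \<omega> in M. w \<omega> = 0"
    using w_int w_nonneg by (simp add: integral_nonneg_eq_0_iff_AE)
  then have "(\<integral>\<omega>. w \<omega> * indicator B (Z \<omega>) \<partial>M) = (\<integral>\<omega>. 0 \<partial>M)"
    using B by (intro integral_cong_AE) (auto elim!: eventually_mono)
  then show ?thesis
    using True by simp
next
  case False
  define c where "c = (\<integral>\<omega>. w \<omega> \<partial>M)"
  have "c > 0"
    using False w_nonneg by (simp add: c_def order_less_le)
  have "(\<integral>\<omega>. w \<omega> / c * indicator B (Z \<omega>) \<partial>M) = measure std_normal_distribution B"
    using \<open>c > 0\<close> w_nonneg w_int char_cos char_sin
    by (intro std_normal_under_density[OF assms(1) _ _ _ _ _ _ _ B])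
       (auto simp: c_def[symmetric] mult.commute[of _ "1 / c"])
  then show ?thesis
    using \<open>c > 0\<close> by (simp add: c_def[symmetric] field_simps)
qed

text \<open>Real and imaginary parts of the statement that \<open>(X, Y)\<close> has the characteristic function
  of a standard Gaussian vector in \<open>\<real>\<^sup>2\<close>.\<close>
definition std_gaussian_pair :: "'a measure \<Rightarrow> ('a \<Rightarrow> real) \<Rightarrow> ('a \<Rightarrow> real) \<Rightarrow> bool" where
  "std_gaussian_pair M X Y \<longleftrightarrow>
     (\<forall>s t. (\<integral>\<omega>. cos (s * X \<omega> + t * Y \<omega>) \<partial>M) = exp (-(s\<^sup>2 + t\<^sup>2)/2) \<and>
            (\<integral>\<omega>. sin (s * X \<omega> + t * Y \<omega>) \<partial>M) = 0)"

lemma std_gaussian_pair_phase: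
  fixes M :: "'a measure" and X Y :: "'a \<Rightarrow> real"
  assumes "prob_space M" and [measurable]: "X \<in> borel_measurable M" "Y \<in> borel_measurable M"
    and G: "std_gaussian_pair M X Y"
  shows "(\<integral>\<omega>. cos (s * X \<omega> + t * Y \<omega> + a) \<partial>M) = cos a * exp (-(s\<^sup>2 + t\<^sup>2)/2)"
    and "(\<integral>\<omega>. sin (s * X \<omega> + t * Y \<omega> + a) \<partial>M) = sin a * exp (-(s\<^sup>2 + t\<^sup>2)/2)"
proof -
  interpret prob_space M by fact
  note [simp] = integrable_cos_comp integrable_sin_comp
  have "cos (s * X \<omega> + t * Y \<omega> + a) = cos (s * X \<omega> + t * Y \<omega>) * cos a - sin (s * X \<omega> + t * Y \<omega>) * sin a"
    and "sin (s * X \<omega> + t * Y \<omega> + a) = sin (s * X \<omega> + t * Y \<omega>) * cos a + cos (s * X \<omega> + t * Y \<omega>) * sin a"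
    for \<omega>
    by (rule cos_add, rule sin_add)
  then show "(\<integral>\<omega>. cos (s * X \<omega> + t * Y \<omega> + a) \<partial>M) = cos a * exp (-(s\<^sup>2 + t\<^sup>2)/2)"
    and "(\<integral>\<omega>. sin (s * X \<omega> + t * Y \<omega> + a) \<partial>M) = sin a * exp (-(s\<^sup>2 + t\<^sup>2)/2)"
    using G by (simp_all add: std_gaussian_pair_def)
qed

lemma std_gaussian_pair_snd:
  fixes M :: "'a measure" and X Y :: "'a \<Rightarrow> real"
  assumes "prob_space M" and [measurable]: "X \<in> borel_measurable M" "Y \<in> borel_measurable M"
    and G: "std_gaussian_pair M X Y" and B: "B \<in> sets borel"
  shows "(\<integral>\<omega>. indicator B (Y \<omega>) \<partial>M) = measure std_normal_distribution B"
proof -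
  interpret prob_space M by fact
  show ?thesis
    using std_normal_under_density[OF assms(1) assms(3), of "\<lambda>_. 1" B] G B
      spec[OF spec[OF G[unfolded std_gaussian_pair_def], of 0]]
    by (simp add: prob_space)
qed

lemma std_gaussian_pair_tilted_char:
  fixes M :: "'a measure" and X Y :: "'a \<Rightarrow> real"
  assumes "prob_space M" and [measurable]: "X \<in> borel_measurable M" "Y \<in> borel_measurable M"
    and G: "std_gaussian_pair M X Y"
  shows "(\<integral>\<omega>. (1 + cos (s * X \<omega> + a)) * cos (t * Y \<omega>) \<partial>M) = (1 + cos a * exp (-(s\<^sup>2)/2)) * exp (-(t\<^sup>2)/2)"
    and "(\<integral>\<omega>. (1 + cos (s * X \<omega> + a)) * sin (t * Y \<omega>) \<partial>M) = 0"
proof -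
  interpret prob_space M by fact
  note phase = std_gaussian_pair_phase[OF assms]
  note [simp] = integrable_cos_comp integrable_sin_comp
  have "(1 + cos (s * X \<omega> + a)) * cos (t * Y \<omega>) = cos (0 * X \<omega> + t * Y \<omega> + 0)
      + (cos (s * X \<omega> + t * Y \<omega> + a) + cos (s * X \<omega> + (-t) * Y \<omega> + a)) / 2" for \<omega>
    using cos_times_cos[of "s * X \<omega> + a" "t * Y \<omega>"] by (simp add: algebra_simps)
  then have "(\<integral>\<omega>. (1 + cos (s * X \<omega> + a)) * cos (t * Y \<omega>) \<partial>M) = (\<integral>\<omega>. cos (0 * X \<omega> + t * Y \<omega> + 0) \<partial>M)
      + ((\<integral>\<omega>. cos (s * X \<omega> + t * Y \<omega> + a) \<partial>M) + (\<integral>\<omega>. cos (s * X \<omega> + (-t) * Y \<omega> + a) \<partial>M)) / 2"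
    by (simp del: mult_zero_left add_0_right)
  also have "\<dots> = exp (-(0\<^sup>2 + t\<^sup>2)/2) + (cos a * exp (-(s\<^sup>2 + t\<^sup>2)/2) + cos a * exp (-(s\<^sup>2 + (-t)\<^sup>2)/2)) / 2"
    by (simp only: phase cos_zero mult_1)
  finally show "(\<integral>\<omega>. (1 + cos (s * X \<omega> + a)) * cos (t * Y \<omega>) \<partial>M) = (1 + cos a * exp (-(s\<^sup>2)/2)) * exp (-(t\<^sup>2)/2)"
    by (simp add: exp_add[symmetric] field_simps)
  have "(1 + cos (s * X \<omega> + a)) * sin (t * Y \<omega>) = sin (0 * X \<omega> + t * Y \<omega> + 0)
      + (sin (s * X \<omega> + t * Y \<omega> + a) - sin (s * X \<omega> + (-t) * Y \<omega> + a)) / 2" for \<omega>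
    using cos_times_sin[of "s * X \<omega> + a" "t * Y \<omega>"] by (simp add: algebra_simps)
  then have "(\<integral>\<omega>. (1 + cos (s * X \<omega> + a)) * sin (t * Y \<omega>) \<partial>M) = (\<integral>\<omega>. sin (0 * X \<omega> + t * Y \<omega> + 0) \<partial>M)
      + ((\<integral>\<omega>. sin (s * X \<omega> + t * Y \<omega> + a) \<partial>M) - (\<integral>\<omega>. sin (s * X \<omega> + (-t) * Y \<omega> + a) \<partial>M)) / 2"
    by (simp del: mult_zero_left add_0_right)
  also have "\<dots> = sin 0 * exp (-(0\<^sup>2 + t\<^sup>2)/2) + (sin a * exp (-(s\<^sup>2 + t\<^sup>2)/2) - sin a * exp (-(s\<^sup>2 + (-t)\<^sup>2)/2)) / 2"
    by (simp only: phase)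
  finally show "(\<integral>\<omega>. (1 + cos (s * X \<omega> + a)) * sin (t * Y \<omega>) \<partial>M) = 0"
    by simp
qed

lemma std_gaussian_pair_cos_indicator:
  fixes M :: "'a measure" and X Y :: "'a \<Rightarrow> real"
  assumes "prob_space M" and [measurable]: "X \<in> borel_measurable M" "Y \<in> borel_measurable M"
    and G: "std_gaussian_pair M X Y" and B: "B \<in> sets borel"
  shows "(\<integral>\<omega>. cos (s * X \<omega> + a) * indicator B (Y \<omega>) \<partial>M)
           = cos a * exp (-(s\<^sup>2)/2) * measure std_normal_distribution B"
proof -
  interpret prob_space M by fact
  note tilted = std_gaussian_pair_tilted_char[OF assms(1-4)]
  \<comment> \<open>\<open>Y\<close> stays standard normal under the tilted measure \<open>(1 + cos (s X + a)) dM\<close>\<close>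
  define w where "w = (\<lambda>\<omega>. 1 + cos (s * X \<omega> + a))"
  have [simp]: "integrable M (\<lambda>\<omega>. 1 + cos (s * X \<omega> + a))"
    by (simp add: integrable_cos_comp)
  have mass: "(\<integral>\<omega>. 1 + cos (s * X \<omega> + a) \<partial>M) = 1 + cos a * exp (-(s\<^sup>2)/2)"
    using tilted(1)[of s a 0] by simp
  have "(\<integral>\<omega>. w \<omega> * indicator B (Y \<omega>) \<partial>M) = (\<integral>\<omega>. w \<omega> \<partial>M) * measure std_normal_distribution B"
  proof (rule std_normal_under_weight[OF assms(1) assms(3) _ _ _ _ _ B])
    show "0 \<le> w \<omega>" for \<omega>
      using cos_ge_minus_one[of "s * X \<omega> + a"] by (simp add: w_def del: cos_ge_minus_one)
  qed (simp_all add: w_def mass tilted)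
  moreover have "(\<integral>\<omega>. w \<omega> * indicator B (Y \<omega>) \<partial>M)
      = measure std_normal_distribution B + (\<integral>\<omega>. cos (s * X \<omega> + a) * indicator B (Y \<omega>) \<partial>M)"
    using std_gaussian_pair_snd[OF assms] B
    by (simp add: w_def distrib_right integrable_abs_bounded[where c=1] indicator_def)
  ultimately show ?thesis
    unfolding w_def mass by (simp add: algebra_simps)
qed

text \<open>Kac's criterion: a Gaussian characteristic function of the pair makes \<open>X\<close>, \<open>Y\<close> independent.\<close>
lemma std_gaussian_pair_indicator_prod:
  fixes M :: "'a measure" and X Y :: "'a \<Rightarrow> real"
  assumes "prob_space M" and [measurable]: "X \<in> borel_measurable M" "Y \<in> borel_measurable M"
    and G: "std_gaussian_pair M X Y" and A: "A \<in> sets borel" and B: "B \<in> sets borel"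
  shows "(\<integral>\<omega>. indicator A (X \<omega>) * indicator B (Y \<omega>) \<partial>M)
          = measure std_normal_distribution A * measure std_normal_distribution B"
proof -
  interpret prob_space M by fact
  have "(\<integral>\<omega>. indicator B (Y \<omega>) * indicator A (X \<omega>) \<partial>M)
      = (\<integral>\<omega>. indicator B (Y \<omega>) \<partial>M) * measure std_normal_distribution A"
  proof (rule std_normal_under_weight[OF assms(1) assms(2) _ _ _ _ _ A])
    show "(\<lambda>\<omega>. indicator B (Y \<omega>)) \<in> borel_measurable M" "integrable M (\<lambda>\<omega>. indicator B (Y \<omega>) :: real)"
      using B by (auto intro!: integrable_abs_bounded[where c=1])
    show "0 \<le> (indicator B (Y \<omega>) :: real)" for \<omega>
      by simp
    show "(\<integral>\<omega>. indicator B (Y \<omega>) * cos (t * X \<omega>) \<partial>M) = (\<integral>\<omega>. indicator B (Y \<omega>) \<partial>M) * exp (-(t\<^sup>2)/2)" for t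
      using std_gaussian_pair_cos_indicator[OF assms(1-4) B, of t 0] std_gaussian_pair_snd[OF assms(1-4) B]
      by (simp add: mult.commute)
    show "(\<integral>\<omega>. indicator B (Y \<omega>) * sin (t * X \<omega>) \<partial>M) = 0" for t
      using std_gaussian_pair_cos_indicator[OF assms(1-4) B, of t "- pi / 2"]
      by (simp add: mult.commute cos_diff)
  qed
  then show ?thesis
    using std_gaussian_pair_snd[OF assms(1-4) B] by (simp add: mult.commute)
qed

lemma measure_std_normal_eq_integral:
  assumes "S \<in> sets borel"
  shows "measure std_normal_distribution S = (\<integral>x. std_normal_density x * indicator S x \<partial>lborel)"
proof -
  have "measure std_normal_distribution S = (\<integral>x. indicator S x \<partial>std_normal_distribution)"
    using assms by simp
  also have "\<dots> = (\<integral>x. std_normal_density x * indicator S x \<partial>lborel)"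
    using assms by (subst integral_density) auto
  finally show ?thesis .
qed

lemma integrable_mult_indicator_greaterThanLessThan:
  "integrable lborel (\<lambda>x::real. c * indicator {a<..<b} x :: real)"
proof (cases "a \<le> b")
  case True
  then show ?thesis
    by (intro integrable_mult_right integrable_real_indicator) auto
qed simp

lemma integrable_std_normal_density_indicator:
  "integrable lborel (\<lambda>x. std_normal_density x * indicator {a<..<b} x)"
  by (rule Bochner_Integration.integrable_bound[OF integrable_mult_indicator_greaterThanLessThan[of "1 / sqrt (2 * pi)" a b]])
     (auto simp: std_normal_density_def indicator_def divide_right_mono)

lemma measure_std_normal_greaterThanLessThan_ge:
  assumes "a \<le> b" "-b \<le> a"
  shows "measure std_normal_distribution {a<..<b} \<ge> (b - a) * std_normal_density b"
proof -
  have "std_normal_density b \<le> std_normal_density x" if "x \<in> {a<..<b}" for x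
  proof -
    have "x\<^sup>2 \<le> b\<^sup>2"
      using that assms by (auto intro!: power2_le_iff_abs_le[THEN iffD2] abs_leI)
    then show ?thesis
      by (simp add: std_normal_density_def divide_right_mono)
  qed
  then have "(\<integral>x. std_normal_density b * indicator {a<..<b} x \<partial>lborel)
      \<le> (\<integral>x. std_normal_density x * indicator {a<..<b} x \<partial>lborel)"
    by (intro Bochner_Integration.integral_mono integrable_mult_indicator_greaterThanLessThan
        integrable_std_normal_density_indicator) (simp add: indicator_def)
  then show ?thesis
    using assms by (simp add: measure_std_normal_eq_integral mult.commute)
qed

lemma measure_std_normal_greaterThanLessThan_le:
  assumes "a \<le> b"
  shows "measure std_normal_distribution {a<..<b} \<le> (b - a) / sqrt (2 * pi)"
proof -
  have "(\<integral>x. std_normal_density x * indicator {a<..<b} x \<partial>lborel)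
      \<le> (\<integral>x. 1 / sqrt (2 * pi) * indicator {a<..<b} x \<partial>lborel)"
    by (intro Bochner_Integration.integral_mono integrable_mult_indicator_greaterThanLessThan
        integrable_std_normal_density_indicator)
       (auto simp: std_normal_density_def indicator_def divide_right_mono)
  then show ?thesis
    using assms by (simp add: measure_std_normal_eq_integral)
qed

lemma measure_std_normal_abs_ge_half:
  "measure std_normal_distribution {x. 1/2 \<le> \<bar>x\<bar>} \<ge> 1 - 1 / sqrt (2 * pi)"
proof -
  interpret prob_space std_normal_distribution
    using prob_space_normal_density by simp
  have compl: "{x. 1/2 \<le> \<bar>x\<bar>} = space std_normal_distribution - {-1/2<..<1/2::real}"
    by auto
  have "measure std_normal_distribution {x. 1/2 \<le> \<bar>x\<bar>} = 1 - measure std_normal_distribution {-1/2<..<1/2::real}"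
    unfolding compl by (rule prob_compl) simp
  then show ?thesis
    using measure_std_normal_greaterThanLessThan_le[of "-1/2" "1/2"] by simp
qed

section \<open>Wiener integrals of linear combinations of the basis\<close>

lemma set_integrable_mult_L2_01:
  assumes "L2_01 f" "L2_01 g"
  shows "set_integrable lborel {0..1} (\<lambda>t. f t * g t)"
proof -
  have [measurable]: "f \<in> borel_measurable borel" "g \<in> borel_measurable borel"
    using assms by (auto simp: L2_01_def)
  have "integrable lborel (\<lambda>t. indicator {0..1} t *\<^sub>R (f t)\<^sup>2 + indicator {0..1} t *\<^sub>R (g t)\<^sup>2)"
    using assms by (auto simp: L2_01_def set_integrable_def)
  then show ?thesis
    unfolding set_integrable_def
  proof (rule Bochner_Integration.integrable_bound)
    show "(\<lambda>t. indicator {0..1} t *\<^sub>R (f t * g t)) \<in> borel_measurable lborel"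
      by simp
    have "\<bar>f x * g x\<bar> \<le> (f x)\<^sup>2 + (g x)\<^sup>2" for x
    proof -
      have "2 * \<bar>f x\<bar> * \<bar>g x\<bar> \<le> (f x)\<^sup>2 + (g x)\<^sup>2"
        using sum_squares_bound[of "\<bar>f x\<bar>" "\<bar>g x\<bar>"] by simp
      moreover have "0 \<le> \<bar>f x\<bar> * \<bar>g x\<bar>"
        by simp
      ultimately show ?thesis
        unfolding abs_mult by linarith
    qed
    then show "AE x in lborel. norm (indicator {0..1} x *\<^sub>R (f x * g x))
        \<le> norm (indicator {0..1} x *\<^sub>R (f x)\<^sup>2 + indicator {0..1} x *\<^sub>R (g x)\<^sup>2)"
      by (auto simp: indicator_def)
  qed
qed

lemma L2_01_lincomb:
  assumes "L2_01 f" "L2_01 g"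
  shows "L2_01 (\<lambda>t. a * f t + b * g t)"
proof -
  have [measurable]: "f \<in> borel_measurable borel" "g \<in> borel_measurable borel"
    using assms by (auto simp: L2_01_def)
  have "set_integrable lborel {0..1} (\<lambda>t. a\<^sup>2 * (f t * f t) + (2 * a * b * (f t * g t) + b\<^sup>2 * (g t * g t)))"
    using assms by (intro set_integral_add set_integrable_mult_right set_integrable_mult_L2_01)
  moreover have "a\<^sup>2 * (f t * f t) + (2 * a * b * (f t * g t) + b\<^sup>2 * (g t * g t)) = (a * f t + b * g t)\<^sup>2" for t
    by (simp add: power2_eq_square algebra_simps)
  ultimately show ?thesis
    by (simp add: L2_01_def)
qed

lemma L2_01_sum:
  assumes "finite S" "\<And>j. j \<in> S \<Longrightarrow> L2_01 (g j)"
  shows "L2_01 (\<lambda>t. \<Sum>j\<in>S. c j * g j t)"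
  using assms
proof (induction S rule: finite_induct)
  case empty
  then show ?case
    by (simp add: L2_01_def set_integrable_def)
next
  case (insert x F)
  then have "L2_01 (\<lambda>t. c x * g x t + 1 * (\<Sum>j\<in>F. c j * g j t))"
    by (intro L2_01_lincomb) auto
  then show ?case
    using insert by simp
qed

lemma inner01_commute: "inner01 f g = inner01 g f"
  by (simp add: inner01_def mult.commute)

lemma inner01_lincomb_left:
  assumes "L2_01 f" "L2_01 g" "L2_01 h"
  shows "inner01 (\<lambda>t. a * f t + b * g t) h = a * inner01 f h + b * inner01 g h"
proof -
  have "(a * f t + b * g t) * h t = a * (f t * h t) + b * (g t * h t)" for t
    by (simp add: algebra_simps)
  then show ?thesis
    using assms unfolding inner01_def
    by (simp add: set_integral_add set_integrable_mult_right set_integral_mult_right set_integrable_mult_L2_01)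
qed

lemma inner01_sum_left:
  assumes "finite S" "\<And>j. j \<in> S \<Longrightarrow> L2_01 (g j)" "L2_01 h"
  shows "inner01 (\<lambda>t. \<Sum>j\<in>S. c j * g j t) h = (\<Sum>j\<in>S. c j * inner01 (g j) h)"
  using assms
proof (induction S rule: finite_induct)
  case empty
  then show ?case
    by (simp add: inner01_def)
next
  case (insert x F)
  then have "inner01 (\<lambda>t. c x * g x t + 1 * (\<Sum>j\<in>F. c j * g j t)) h
      = c x * inner01 (g x) h + 1 * inner01 (\<lambda>t. \<Sum>j\<in>F. c j * g j t) h"
    by (intro inner01_lincomb_left L2_01_sum) auto
  then show ?case
    using insert by simp
qed

lemma L2_01_f_theta:
  assumes "ONB_01 \<phi>"
  shows "L2_01 (f_theta \<phi> d \<alpha>)"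
  using assms unfolding f_theta_def[abs_def] by (intro L2_01_sum) (auto simp: ONB_01_def)

lemma inner01_f_theta:
  assumes "ONB_01 \<phi>"
  shows "inner01 (f_theta \<phi> d \<alpha>) (f_theta \<phi> d \<beta>) = (\<Sum>j=1..d. \<alpha> j * \<beta> j)"
proof -
  have L2: "\<And>j. j \<in> {1..d} \<Longrightarrow> L2_01 (\<phi> j)"
    and orth: "\<And>i j. i \<in> {1..d} \<Longrightarrow> j \<in> {1..d} \<Longrightarrow> inner01 (\<phi> j) (\<phi> i) = (if j = i then 1 else 0)"
    using assms by (auto simp: ONB_01_def)
  have coord: "inner01 (\<phi> i) (f_theta \<phi> d \<beta>) = \<beta> i" if i: "i \<in> {1..d}" for i
  proof -
    have "inner01 (\<phi> i) (f_theta \<phi> d \<beta>) = (\<Sum>j\<in>{1..d}. \<beta> j * inner01 (\<phi> j) (\<phi> i))"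
      unfolding inner01_commute[of "\<phi> i"] f_theta_def[abs_def] using L2 i by (intro inner01_sum_left) auto
    also have "\<dots> = (\<Sum>j\<in>{1..d}. if j = i then \<beta> j else 0)"
      using orth i by (intro sum.cong) auto
    finally show ?thesis
      using i by simp
  qed
  have "inner01 (f_theta \<phi> d \<alpha>) (f_theta \<phi> d \<beta>) = (\<Sum>i\<in>{1..d}. \<alpha> i * inner01 (\<phi> i) (f_theta \<phi> d \<beta>))"
    unfolding f_theta_def[abs_def] using L2 L2_01_f_theta[OF assms, of d \<beta>]
    by (intro inner01_sum_left) (auto simp: f_theta_def[abs_def])
  then show ?thesis
    using coord by simp
qed

lemma f_theta_lincomb:
  "(\<lambda>t. a * f_theta \<phi> d \<alpha> t + b * f_theta \<phi> d \<beta> t) = f_theta \<phi> d (\<lambda>j. a * \<alpha> j + b * \<beta> j)"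
  by (auto simp: f_theta_def sum_distrib_left sum.distrib[symmetric] algebra_simps intro!: sum.cong)

lemma integral_cos_sin_normal:
  fixes M :: "'a measure" and Z :: "'a \<Rightarrow> real"
  assumes "prob_space M" and Z: "distributed M lborel Z (normal_density 0 \<sigma>)" and "\<sigma> > 0"
  shows "(\<integral>\<omega>. cos (Z \<omega>) \<partial>M) = exp (-(\<sigma>\<^sup>2)/2)" and "(\<integral>\<omega>. sin (Z \<omega>) \<partial>M) = 0"
proof -
  interpret prob_space M by fact
  interpret N: prob_space std_normal_distribution
    using prob_space_normal_density by simp
  define Z' where "Z' \<omega> = Z \<omega> / \<sigma>" for \<omega>
  have "distributed M lborel Z' std_normal_density"
    using Z normal_standard_normal_convert[OF \<open>\<sigma> > 0\<close>] by (simp add: Z'_def[abs_def])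
  then have [measurable]: "Z' \<in> borel_measurable M" and law: "distr M lborel Z' = std_normal_distribution"
    unfolding distributed_def by auto
  have Z_eq: "Z \<omega> = \<sigma> * Z' \<omega>" for \<omega>
    using \<open>\<sigma> > 0\<close> by (simp add: Z'_def)
  have int: "complex_integrable std_normal_distribution (\<lambda>x. iexp (\<sigma> * x))"
    by (rule N.integrable_iexp) auto
  have char: "(CLINT x|std_normal_distribution. iexp (\<sigma> * x)) = complex_of_real (exp (-(\<sigma>\<^sup>2)/2))"
    using char_std_normal_distribution unfolding char_def by metis
  have "(\<integral>\<omega>. cos (Z \<omega>) \<partial>M) = (\<integral>x. cos (\<sigma> * x) \<partial>std_normal_distribution)"
    unfolding Z_eq law[symmetric] by (subst integral_distr) auto
  also have "\<dots> = Re (CLINT x|std_normal_distribution. iexp (\<sigma> * x))"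
    using integral_Re[OF int] by (simp add: Re_exp)
  finally show "(\<integral>\<omega>. cos (Z \<omega>) \<partial>M) = exp (-(\<sigma>\<^sup>2)/2)"
    using char by simp
  have "(\<integral>\<omega>. sin (Z \<omega>) \<partial>M) = (\<integral>x. sin (\<sigma> * x) \<partial>std_normal_distribution)"
    unfolding Z_eq law[symmetric] by (subst integral_distr) auto
  also have "\<dots> = Im (CLINT x|std_normal_distribution. iexp (\<sigma> * x))"
    using integral_Im[OF int] by (simp add: Im_exp)
  finally show "(\<integral>\<omega>. sin (Z \<omega>) \<partial>M) = 0"
    using char by simp
qed

lemma std_gaussian_pair_wiener_integral:
  assumes W: "wiener_integral M I" and p: "L2_01 p" and q: "L2_01 q"
    and pp: "inner01 p p = 1" and qq: "inner01 q q = 1" and pq: "inner01 p q = 0"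
  shows "std_gaussian_pair M (I p) (I q)"
  unfolding std_gaussian_pair_def
proof (intro allI)
  fix s t :: real
  have "prob_space M" and I_meas: "\<And>f. L2_01 f \<Longrightarrow> I f \<in> borel_measurable M"
    and lin: "\<And>f g a b. L2_01 f \<Longrightarrow> L2_01 g \<Longrightarrow> (AE \<omega> in M. I (\<lambda>t. a * f t + b * g t) \<omega> = a * I f \<omega> + b * I g \<omega>)"
    and gauss: "\<And>f. L2_01 f \<Longrightarrow> inner01 f f > 0 \<Longrightarrow> distributed M lborel (I f) (normal_density 0 (sqrt (inner01 f f)))"
    using W unfolding wiener_integral_def by blast+
  interpret prob_space M by fact
  define g where "g = (\<lambda>x. s * p x + t * q x)"
  have g: "L2_01 g"
    unfolding g_def using p q by (rule L2_01_lincomb)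
  have [measurable]: "I p \<in> borel_measurable M" "I q \<in> borel_measurable M" "I g \<in> borel_measurable M"
    using I_meas p q g by auto
  have gp: "inner01 g p = s" and gq: "inner01 g q = t"
    unfolding g_def using p q pp qq pq inner01_commute[of q p] by (simp_all add: inner01_lincomb_left)
  have "inner01 g g = s * inner01 p g + t * inner01 q g"
    using inner01_lincomb_left[OF p q g, of s t] by (simp add: g_def)
  also have "\<dots> = s\<^sup>2 + t\<^sup>2"
    using gp gq by (simp add: inner01_commute[of p g] inner01_commute[of q g] power2_eq_square)
  finally have gg: "inner01 g g = s\<^sup>2 + t\<^sup>2" .
  have ae: "AE \<omega> in M. I g \<omega> = s * I p \<omega> + t * I q \<omega>"
    unfolding g_def using p q by (rule lin)
  show "(\<integral>\<omega>. cos (s * I p \<omega> + t * I q \<omega>) \<partial>M) = exp (-(s\<^sup>2 + t\<^sup>2)/2) \<and>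
        (\<integral>\<omega>. sin (s * I p \<omega> + t * I q \<omega>) \<partial>M) = 0"
  proof (cases "s = 0 \<and> t = 0")
    case True
    then show ?thesis
      by (simp add: prob_space)
  next
    case False
    then have "s\<^sup>2 + t\<^sup>2 > 0"
      by (simp add: sum_power2_gt_zero_iff)
    then have "distributed M lborel (I g) (normal_density 0 (sqrt (s\<^sup>2 + t\<^sup>2)))"
      using gauss[OF g] gg by simp
    moreover have "(\<integral>\<omega>. cos (s * I p \<omega> + t * I q \<omega>) \<partial>M) = (\<integral>\<omega>. cos (I g \<omega>) \<partial>M)"
      and "(\<integral>\<omega>. sin (s * I p \<omega> + t * I q \<omega>) \<partial>M) = (\<integral>\<omega>. sin (I g \<omega>) \<partial>M)"
      using ae by (auto intro!: integral_cong_AE elim!: eventually_mono)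
    ultimately show ?thesis
      using integral_cos_sin_normal[OF prob_space_axioms] \<open>s\<^sup>2 + t\<^sup>2 > 0\<close> by simp
  qed
qed

section \<open>Disagreement of two Bayes classifiers\<close>

lemma sum_square_add_eq:
  fixes x y :: "'a \<Rightarrow> real"
  shows "(\<Sum>j\<in>A. (x j + y j)\<^sup>2) = 2 * (\<Sum>j\<in>A. (x j)\<^sup>2) + 2 * (\<Sum>j\<in>A. (y j)\<^sup>2) - (\<Sum>j\<in>A. (x j - y j)\<^sup>2)"
proof -
  have "(x j + y j)\<^sup>2 = 2 * (x j)\<^sup>2 + 2 * (y j)\<^sup>2 - (x j - y j)\<^sup>2" for j
    by (simp add: power2_eq_square algebra_simps)
  then show ?thesis
    by (simp add: sum.distrib sum_subtractf sum_distrib_left)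
qed

lemma sum_add_mult_diff:
  fixes x y :: "'a \<Rightarrow> real"
  shows "(\<Sum>j\<in>A. (x j + y j) * (x j - y j)) = (\<Sum>j\<in>A. (x j)\<^sup>2) - (\<Sum>j\<in>A. (y j)\<^sup>2)"
  by (simp add: power2_eq_square algebra_simps sum_subtractf)

lemma Phi_W_disagree:
  assumes "sqnorm d \<theta> = R2" "sqnorm d \<theta>' = R2"
    and "I (f_theta \<phi> d \<theta>) \<omega> = u + v" "I (f_theta \<phi> d \<theta>') \<omega> = u - v"
    and "R2 / 2 - c < u" "u < R2 / 2 + c" "c \<le> \<bar>v\<bar>"
  shows "\<bar>Phi_W \<phi> d I \<theta> \<omega> - Phi_W \<phi> d I \<theta>' \<omega>\<bar> = 1"
  using assms by (cases "v \<ge> 0") (auto simp: Phi_W_def)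

lemma L1_Q0_dist_ge_disagreement_event:
  fixes X Y :: "'a \<Rightarrow> real"
  assumes ONB: "ONB_01 \<phi>" and W: "wiener_integral M I"
    and [measurable]: "X \<in> borel_measurable M" "Y \<in> borel_measurable M"
    and norm: "sqnorm d \<theta> = R2" "sqnorm d \<theta>' = R2" and "\<sigma>p > 0" "\<sigma>q > 0"
    and "AE \<omega> in M. I (f_theta \<phi> d \<theta>) \<omega> = \<sigma>p / 2 * X \<omega> + \<sigma>q / 2 * Y \<omega>"
    and "AE \<omega> in M. I (f_theta \<phi> d \<theta>') \<omega> = \<sigma>p / 2 * X \<omega> - \<sigma>q / 2 * Y \<omega>"
  shows "(\<integral>\<omega>. indicator {(R2 - \<sigma>q / 2) / \<sigma>p <..< (R2 + \<sigma>q / 2) / \<sigma>p} (X \<omega>)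
            * indicator {y. 1/2 \<le> \<bar>y\<bar>} (Y \<omega>) \<partial>M) \<le> L1_Q0_dist M \<phi> d I \<theta> \<theta>'"
proof -
  have "prob_space M" and I_meas: "\<And>f. L2_01 f \<Longrightarrow> I f \<in> borel_measurable M"
    using W unfolding wiener_integral_def by blast+
  interpret prob_space M by fact
  let ?J = "{(R2 - \<sigma>q / 2) / \<sigma>p <..< (R2 + \<sigma>q / 2) / \<sigma>p}"
  have "AE \<omega> in M. indicator ?J (X \<omega>) * indicator {y. 1/2 \<le> \<bar>y\<bar>} (Y \<omega>)
      \<le> \<bar>Phi_W \<phi> d I \<theta> \<omega> - Phi_W \<phi> d I \<theta>' \<omega>\<bar>"
    using assms(9,10)
  proof eventually_elim
    case (elim \<omega>)
    show ?case
    proof (cases "X \<omega> \<in> ?J \<and> 1/2 \<le> \<bar>Y \<omega>\<bar>")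
      case True
      then have "R2 / 2 - \<sigma>q / 4 < \<sigma>p / 2 * X \<omega>" "\<sigma>p / 2 * X \<omega> < R2 / 2 + \<sigma>q / 4"
        and "\<sigma>q / 4 \<le> \<bar>\<sigma>q / 2 * Y \<omega>\<bar>"
        using \<open>\<sigma>p > 0\<close> \<open>\<sigma>q > 0\<close> by (auto simp: field_simps abs_mult)
      then have "\<bar>Phi_W \<phi> d I \<theta> \<omega> - Phi_W \<phi> d I \<theta>' \<omega>\<bar> = 1"
        by (rule Phi_W_disagree[where I=I and \<omega>=\<omega> and \<phi>=\<phi>, OF norm elim])
      then show ?thesis
        by (simp add: indicator_def)
    qed (auto simp: indicator_def)
  qed
  then show ?thesis
    unfolding L1_Q0_dist_def using I_meas[OF L2_01_f_theta[OF ONB]]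
    by (intro integral_mono_AE integrable_abs_bounded[where c=1]) (auto simp: indicator_def Phi_W_def)
qed

lemma L1_Q0_dist_ge_std_normal_product:
  fixes \<theta> \<theta>' :: "nat \<Rightarrow> real" and R2 \<delta>2 :: real
  assumes ONB: "ONB_01 \<phi>" and W: "wiener_integral M I"
    and norm: "sqnorm d \<theta> = R2" "sqnorm d \<theta>' = R2"
    and dist: "(\<Sum>j=1..d. (\<theta> j - \<theta>' j)\<^sup>2) = \<delta>2" and "\<delta>2 > 0" and "4 * R2 - \<delta>2 > 0"
  defines "\<sigma>p \<equiv> sqrt (4 * R2 - \<delta>2)" and "\<sigma>q \<equiv> sqrt \<delta>2"
  shows "L1_Q0_dist M \<phi> d I \<theta> \<theta>' \<ge>
           measure std_normal_distribution {(R2 - \<sigma>q / 2) / \<sigma>p <..< (R2 + \<sigma>q / 2) / \<sigma>p}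
           * measure std_normal_distribution {y. 1/2 \<le> \<bar>y\<bar>}"
proof -
  have "prob_space M" and I_meas: "\<And>f. L2_01 f \<Longrightarrow> I f \<in> borel_measurable M"
    and lin: "\<And>f g a b. L2_01 f \<Longrightarrow> L2_01 g \<Longrightarrow> (AE \<omega> in M. I (\<lambda>t. a * f t + b * g t) \<omega> = a * I f \<omega> + b * I g \<omega>)"
    using W unfolding wiener_integral_def by blast+
  have "\<sigma>p > 0" "\<sigma>q > 0"
    using assms by (simp_all add: \<sigma>p_def \<sigma>q_def)
  \<comment> \<open>\<open>\<theta> + \<theta>'\<close> and \<open>\<theta> - \<theta>'\<close> are orthogonal because \<open>\<theta>\<close> and \<open>\<theta>'\<close> have the same norm\<close>
  define p where "p = f_theta \<phi> d (\<lambda>j. (\<theta> j + \<theta>' j) / \<sigma>p)"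
  define q where "q = f_theta \<phi> d (\<lambda>j. (\<theta> j - \<theta>' j) / \<sigma>q)"
  have p: "L2_01 p" and q: "L2_01 q"
    unfolding p_def q_def using L2_01_f_theta[OF ONB] by auto
  have [measurable]: "I p \<in> borel_measurable M" "I q \<in> borel_measurable M"
    using I_meas p q by auto
  have "(\<Sum>j=1..d. (\<theta> j + \<theta>' j)\<^sup>2) = \<sigma>p\<^sup>2" and "(\<Sum>j=1..d. (\<theta> j - \<theta>' j)\<^sup>2) = \<sigma>q\<^sup>2"
    using assms by (simp_all add: sum_square_add_eq sqnorm_def)
  moreover have "(\<Sum>j=1..d. (\<theta> j + \<theta>' j) * (\<theta> j - \<theta>' j)) = 0"
    using norm by (simp add: sum_add_mult_diff sqnorm_def)
  ultimately have "inner01 p p = 1" "inner01 q q = 1" "inner01 p q = 0"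
    using \<open>\<sigma>p > 0\<close> \<open>\<sigma>q > 0\<close> unfolding p_def q_def inner01_f_theta[OF ONB]
    by (simp_all add: power2_eq_square flip: sum_divide_distrib)
  then have G: "std_gaussian_pair M (I p) (I q)"
    using W p q by (intro std_gaussian_pair_wiener_integral)
  have "f_theta \<phi> d \<theta> = (\<lambda>t. \<sigma>p / 2 * p t + \<sigma>q / 2 * q t)"
    and "f_theta \<phi> d \<theta>' = (\<lambda>t. \<sigma>p / 2 * p t + (- \<sigma>q / 2) * q t)"
    using \<open>\<sigma>p > 0\<close> \<open>\<sigma>q > 0\<close> unfolding p_def q_def f_theta_lincomb
    by (auto intro!: arg_cong[where f="f_theta \<phi> d"] simp: field_simps)
  then have "AE \<omega> in M. I (f_theta \<phi> d \<theta>) \<omega> = \<sigma>p / 2 * I p \<omega> + \<sigma>q / 2 * I q \<omega>"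
    and "AE \<omega> in M. I (f_theta \<phi> d \<theta>') \<omega> = \<sigma>p / 2 * I p \<omega> - \<sigma>q / 2 * I q \<omega>"
    using lin[OF p q, of "\<sigma>p / 2" "\<sigma>q / 2"] lin[OF p q, of "\<sigma>p / 2" "- \<sigma>q / 2"] by simp_all
  then have "(\<integral>\<omega>. indicator {(R2 - \<sigma>q / 2) / \<sigma>p <..< (R2 + \<sigma>q / 2) / \<sigma>p} (I p \<omega>)
      * indicator {y. 1/2 \<le> \<bar>y\<bar>} (I q \<omega>) \<partial>M) \<le> L1_Q0_dist M \<phi> d I \<theta> \<theta>'"
    by (intro L1_Q0_dist_ge_disagreement_event[OF ONB W _ _ norm \<open>\<sigma>p > 0\<close> \<open>\<sigma>q > 0\<close>]) simp_all
  then show ?thesis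
    using std_gaussian_pair_indicator_prod[OF \<open>prob_space M\<close> _ _ G] by simp
qed

lemma inverse_sqrt_2pi_le_1: "1 / sqrt (2 * pi) \<le> 1"
  using pi_gt3 by (simp add: real_le_rsqrt)

lemma std_normal_window_product_ge:
  fixes R2 \<sigma>p \<sigma>q :: real
  assumes "0 \<le> R2" "0 < \<sigma>p" "0 < \<sigma>q"
  shows "(1 - 1 / sqrt (2 * pi)) * (\<sigma>q / \<sigma>p) * std_normal_density ((R2 + \<sigma>q / 2) / \<sigma>p)
      \<le> measure std_normal_distribution {(R2 - \<sigma>q / 2) / \<sigma>p <..< (R2 + \<sigma>q / 2) / \<sigma>p}
         * measure std_normal_distribution {y. 1/2 \<le> \<bar>y\<bar>}"
proof -
  let ?a = "(R2 - \<sigma>q / 2) / \<sigma>p" and ?b = "(R2 + \<sigma>q / 2) / \<sigma>p"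
  have "?a \<le> ?b" "- ?b \<le> ?a"
    using assms by (simp_all add: divide_right_mono field_simps)
  then have "(?b - ?a) * std_normal_density ?b \<le> measure std_normal_distribution {?a <..< ?b}"
    by (rule measure_std_normal_greaterThanLessThan_ge)
  then have "(?b - ?a) * std_normal_density ?b * (1 - 1 / sqrt (2 * pi))
      \<le> measure std_normal_distribution {?a <..< ?b} * measure std_normal_distribution {y. 1/2 \<le> \<bar>y\<bar>}"
    using measure_std_normal_abs_ge_half inverse_sqrt_2pi_le_1 by (intro mult_mono) simp_all
  moreover have "?b - ?a = \<sigma>q / \<sigma>p"
    using assms by (simp add: field_simps)
  ultimately show ?thesis
    by (simp add: mult_ac)
qed

lemma gaussian_constant_ge_3: "3 \<le> (1 - 1 / sqrt (2 * pi)) * (4 * pi / sqrt (2 * pi))"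
proof -
  have "(1 - 1 / sqrt (2 * pi)) * (4 * pi / sqrt (2 * pi)) = 2 * sqrt (2 * pi) - 2"
    by (simp add: field_simps)
  moreover have "5 / 2 \<le> sqrt (2 * pi)"
    using pi_approx by (intro real_le_rsqrt) (simp add: power2_eq_square)
  ultimately show ?thesis
    by simp
qed

lemma eight_minus_le_exp_bound:
  fixes u :: real
  assumes "1 \<le> u" "u \<le> 4"
  shows "8 - u \<le> 9 * u * exp (- (u / 8))"
proof -
  have "0 \<le> (u - 8/9) * (8 - u)"
    using assms by (intro mult_nonneg_nonneg) auto
  moreover have "9 * u * (1 - u / 8) - (8 - u) = 9 / 8 * ((u - 8/9) * (8 - u))"
    by (simp add: field_simps)
  ultimately have "8 - u \<le> 9 * u * (1 - u / 8)"
    by linarith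
  also have "\<dots> \<le> 9 * u * exp (- (u / 8))"
    using exp_ge_add_one_self[of "- (u / 8)"] assms by (intro mult_left_mono) auto
  finally show ?thesis .
qed

lemma window_width_bound:
  fixes D k u :: real
  assumes "0 < D" "0 < k" "k \<le> D\<^sup>2" "1 \<le> u" "u \<le> 4"
  shows "sqrt (4 * (D\<^sup>2 + k) - u * k) * sqrt k \<le> 3 * sqrt (u * k) * D * exp (- (u / 16))"
proof (rule power2_le_imp_le)
  have "u * k \<le> 4 * k"
    using assms by (intro mult_right_mono) auto
  then have "u * k \<le> 4 * D\<^sup>2 + 4 * k"
    using zero_le_power2[of D] by linarith
  then have "0 \<le> 4 * (D\<^sup>2 + k) - u * k"
    by (simp add: ring_distribs)
  then have "(sqrt (4 * (D\<^sup>2 + k) - u * k) * sqrt k)\<^sup>2 = (4 * (D\<^sup>2 + k) - u * k) * k"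
    using assms by (simp add: power_mult_distrib)
  also have "\<dots> = (4 * D\<^sup>2 + (4 - u) * k) * k"
    by (simp add: algebra_simps)
  also have "\<dots> \<le> (8 - u) * D\<^sup>2 * k"
    using assms mult_left_mono[of k "D\<^sup>2" "4 - u"] by (intro mult_right_mono) (auto simp: algebra_simps)
  also have "\<dots> \<le> 9 * u * exp (- (u / 8)) * D\<^sup>2 * k"
    using eight_minus_le_exp_bound[OF assms(4,5)] assms by (intro mult_right_mono) auto
  also have "\<dots> = (3 * sqrt (u * k) * D * exp (- (u / 16)))\<^sup>2"
  proof -
    have "(exp (- (u / 16)))\<^sup>2 = exp (- (u / 8))"
      by (simp add: power2_eq_square flip: exp_add)
    moreover have "(sqrt (u * k))\<^sup>2 = u * k"
      using assms by simp
    ultimately show ?thesis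
      by (simp add: power_mult_distrib algebra_simps)
  qed
  finally show "(sqrt (4 * (D\<^sup>2 + k) - u * k) * sqrt k)\<^sup>2 \<le> (3 * sqrt (u * k) * D * exp (- (u / 16)))\<^sup>2" .
qed (use assms in simp)

lemma window_center_bound:
  fixes D k u :: real
  assumes "0 < D" "0 < k" "k \<le> D\<^sup>2" "1 \<le> u" "u \<le> 4"
  shows "((D\<^sup>2 + k + sqrt (u * k) / 2) / sqrt (4 * (D\<^sup>2 + k) - u * k))\<^sup>2 / 2 \<le> D\<^sup>2 + u / 16"
proof -
  let ?\<beta> = "(D\<^sup>2 + k + sqrt (u * k) / 2) / sqrt (4 * (D\<^sup>2 + k) - u * k)"
  have "sqrt k \<le> D"
    using assms real_sqrt_le_mono[OF assms(3)] by simp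
  then have "sqrt (u * k) \<le> sqrt u * D"
    using assms by (simp add: real_sqrt_mult mult_left_mono)
  then have num: "D\<^sup>2 + k + sqrt (u * k) / 2 \<le> 2 * D\<^sup>2 + sqrt u * D / 2"
    using assms by simp
  have "u * k \<le> 4 * k"
    using assms by (intro mult_right_mono) auto
  then have "sqrt ((2 * D)\<^sup>2) \<le> sqrt (4 * (D\<^sup>2 + k) - u * k)"
    by (intro real_sqrt_le_mono) (simp add: power_mult_distrib)
  then have "\<bar>2 * D\<bar> \<le> sqrt (4 * (D\<^sup>2 + k) - u * k)"
    by (simp only: real_sqrt_abs)
  then have den: "2 * D \<le> sqrt (4 * (D\<^sup>2 + k) - u * k)"
    using assms by simp
  have "u * k \<le> 4 * D\<^sup>2 + 4 * k"
    using \<open>u * k \<le> 4 * k\<close> zero_le_power2[of D] by linarith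
  have "?\<beta> \<le> (2 * D\<^sup>2 + sqrt u * D / 2) / (2 * D)"
    using assms num den by (intro frac_le) auto
  also have "\<dots> = D + sqrt u / 4"
    using assms by (simp add: field_simps power2_eq_square)
  finally have "?\<beta>\<^sup>2 \<le> (D + sqrt u / 4)\<^sup>2"
    using assms \<open>u * k \<le> 4 * D\<^sup>2 + 4 * k\<close> by (intro power_mono divide_nonneg_nonneg) auto
  also have "\<dots> \<le> 2 * D\<^sup>2 + u / 8"
    using assms sum_squares_bound[of D "sqrt u / 4"] by (simp add: power2_eq_square algebra_simps)
  finally show ?thesis
    by simp
qed

lemma window_bound_ge_separation:
  fixes D k s2 :: real
  assumes D: "D > 0" and k: "0 < k" "k \<le> D\<^sup>2" and s2: "k \<le> s2" "s2 \<le> 4 * k"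
  shows "sqrt k / (4 * pi * D) * exp (- (D\<^sup>2)) \<le>
     (1 - 1 / sqrt (2 * pi)) * (sqrt s2 / sqrt (4 * (D\<^sup>2 + k) - s2))
        * std_normal_density ((D\<^sup>2 + k + sqrt s2 / 2) / sqrt (4 * (D\<^sup>2 + k) - s2))"
proof -
  define u where "u = s2 / k"
  have s2_eq: "s2 = u * k" and u: "1 \<le> u" "u \<le> 4"
    using k s2 by (auto simp: u_def field_simps)
  define \<sigma>p where "\<sigma>p = sqrt (4 * (D\<^sup>2 + k) - u * k)"
  define \<beta> where "\<beta> = (D\<^sup>2 + k + sqrt (u * k) / 2) / \<sigma>p"
  have "u * k \<le> 4 * k" "0 < D\<^sup>2"
    using k u D by (auto intro: mult_right_mono)
  then have "u * k < 4 * D\<^sup>2 + 4 * k"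
    by linarith
  then have "0 < 4 * (D\<^sup>2 + k) - u * k"
    by (simp add: ring_distribs)
  then have "\<sigma>p > 0"
    by (simp add: \<sigma>p_def)
  have "exp (- (D\<^sup>2)) * exp (- (u / 16)) \<le> exp (- (\<beta>\<^sup>2 / 2))"
    using window_center_bound[OF D k u] by (simp add: \<beta>_def \<sigma>p_def mult_exp_exp)
  have "sqrt k / (4 * pi * D) * exp (- (D\<^sup>2))
      \<le> 3 * sqrt (u * k) * D * exp (- (u / 16)) / \<sigma>p / (4 * pi * D) * exp (- (D\<^sup>2))"
    using window_width_bound[OF D k u] \<open>\<sigma>p > 0\<close> D
    by (intro mult_right_mono divide_right_mono) (simp_all add: \<sigma>p_def field_simps)
  also have "\<dots> = 3 / (4 * pi) * (sqrt (u * k) / \<sigma>p) * (exp (- (D\<^sup>2)) * exp (- (u / 16)))"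
    using D by (simp add: field_simps)
  also have "\<dots> \<le> (1 - 1 / sqrt (2 * pi)) / sqrt (2 * pi) * (sqrt (u * k) / \<sigma>p) * exp (- (\<beta>\<^sup>2 / 2))"
  proof (intro mult_mono)
    show "3 / (4 * pi) \<le> (1 - 1 / sqrt (2 * pi)) / sqrt (2 * pi)"
      using gaussian_constant_ge_3 by (simp add: field_simps)
  qed (use \<open>exp (- (D\<^sup>2)) * exp (- (u / 16)) \<le> exp (- (\<beta>\<^sup>2 / 2))\<close> \<open>\<sigma>p > 0\<close> k u
        inverse_sqrt_2pi_le_1 in auto)
  finally show ?thesis
    by (simp add: s2_eq \<sigma>p_def \<beta>_def std_normal_density_def mult.commute)
qed

section \<open>The Gilbert--Varshamov bound\<close>

definition hamming_separated :: "nat \<Rightarrow> 'a set set \<Rightarrow> bool" where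
  "hamming_separated m C \<longleftrightarrow> (\<forall>S\<in>C. \<forall>T\<in>C. S \<noteq> T \<longrightarrow> m < card (sym_diff S T))"

definition hamming_ball :: "'a set \<Rightarrow> 'a set \<Rightarrow> nat \<Rightarrow> 'a set set" where
  "hamming_ball A S m = {T. T \<subseteq> A \<and> card (sym_diff S T) \<le> m}"

lemma card_hamming_ball_le:
  assumes "finite A" "S \<subseteq> A"
  shows "card (hamming_ball A S m) \<le> card {U. U \<subseteq> A \<and> card U \<le> m}"
proof (rule card_inj_on_le)
  show "inj_on (\<lambda>T. sym_diff S T) (hamming_ball A S m)"
    by (rule inj_onI) blast
qed (use assms in \<open>auto simp: hamming_ball_def\<close>)

lemma card_small_subsets_mult_pow_le:
  assumes "finite A" "card A = n" "m \<le> n"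
  shows "card {U. U \<subseteq> A \<and> card U \<le> m} * 3 ^ (n - m) \<le> 4 ^ n"
proof -
  have "{U. U \<subseteq> A \<and> card U \<le> m} = (\<Union>i\<in>{..m}. {U. U \<subseteq> A \<and> card U = i})"
    by auto
  then have "card {U. U \<subseteq> A \<and> card U \<le> m} \<le> (\<Sum>i\<le>m. card {U. U \<subseteq> A \<and> card U = i})"
    by (simp add: card_UN_le)
  also have "\<dots> = (\<Sum>i\<le>m. n choose i)"
    using n_subsets[OF assms(1)] assms(2) by simp
  finally have "card {U. U \<subseteq> A \<and> card U \<le> m} * 3 ^ (n - m) \<le> (\<Sum>i\<le>m. n choose i) * 3 ^ (n - m)"
    by (rule mult_right_mono) simp
  also have "\<dots> = (\<Sum>i\<le>m. (n choose i) * 3 ^ (n - m))"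
    by (simp add: sum_distrib_right)
  also have "\<dots> \<le> (\<Sum>i\<le>m. (n choose i) * 3 ^ (n - i))"
    by (intro sum_mono mult_left_mono power_increasing) auto
  also have "\<dots> \<le> (\<Sum>i\<le>n. (n choose i) * 3 ^ (n - i))"
    using assms by (intro sum_mono2) auto
  also have "\<dots> = 4 ^ n"
    using binomial_ring[of 1 "3::nat" n] by simp
  finally show ?thesis .
qed

text \<open>A maximal separated family: no further subset of \<open>A\<close> can be added, so the Hamming balls
  of radius \<open>m\<close> around its members cover \<open>Pow A\<close>.\<close>
lemma ex_hamming_separated_covering:
  assumes "finite A"
  obtains C where "C \<subseteq> Pow A" "hamming_separated m C"
    and "Pow A \<subseteq> (\<Union>S\<in>C. hamming_ball A S m)"
proof -
  define P where "P C \<longleftrightarrow> C \<subseteq> Pow A \<and> hamming_separated m C" for C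
  have "P {}"
    by (simp add: P_def hamming_separated_def)
  moreover have "\<forall>C. P C \<longrightarrow> card C < card (Pow A) + 1"
    using assms by (auto simp: P_def less_Suc_eq_le intro: card_mono)
  ultimately obtain C where PC: "P C" and max: "\<And>C'. P C' \<Longrightarrow> card C' \<le> card C"
    using ex_has_greatest_nat[of P "{}" card "card (Pow A) + 1"] by blast
  have "finite C"
    using PC assms by (auto simp: P_def intro: finite_subset)
  have "T \<in> (\<Union>S\<in>C. hamming_ball A S m)" if T: "T \<subseteq> A" for T
  proof (rule ccontr)
    assume "T \<notin> (\<Union>S\<in>C. hamming_ball A S m)"
    then have far: "\<forall>S\<in>C. m < card (sym_diff S T)"
      using T by (auto simp: hamming_ball_def)
    then have "T \<notin> C"
      by auto
    have "P (insert T C)"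
      using PC T far unfolding P_def hamming_separated_def by (auto simp: Un_commute)
    then have "card (insert T C) \<le> card C"
      by (rule max)
    then show False
      using \<open>T \<notin> C\<close> \<open>finite C\<close> by simp
  qed
  then have "Pow A \<subseteq> (\<Union>S\<in>C. hamming_ball A S m)"
    by blast
  with PC that show ?thesis
    unfolding P_def by blast
qed

lemma exp_div_8_pow_4_le: "(exp (real n / 8)) ^ 4 \<le> (27 / 16) ^ n"
proof -
  have "exp (1/2 :: real) \<le> 27 / 16"
  proof (rule power2_le_imp_le)
    show "(exp (1/2 :: real))\<^sup>2 \<le> (27 / 16)\<^sup>2"
      using e_less_272 by (simp add: power2_eq_square flip: exp_add)
  qed simp
  then have "(exp (1/2)) ^ n \<le> (27 / 16 :: real) ^ n"
    by (intro power_mono) auto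
  moreover have "(exp (real n / 8)) ^ 4 = (exp (1/2)) ^ n"
    by (simp flip: exp_of_nat_mult)
  ultimately show ?thesis
    by simp
qed

lemma exp_div_8_le_of_covering:
  fixes c V m n :: nat
  assumes m: "4 * m < n" and cover: "2 ^ n \<le> c * V" and volume: "V * 3 ^ (n - m) \<le> 4 ^ n"
  shows "exp (real n / 8) \<le> real c"
proof -
  have "(27::real) ^ n \<le> (3 ^ (n - m)) ^ 4"
  proof -
    have "(27::real) ^ n = 3 ^ (3 * n)"
      by (simp add: power_mult)
    also have "\<dots> \<le> 3 ^ (4 * (n - m))"
      using m by (intro power_increasing) auto
    finally show ?thesis
      by (simp add: power_mult mult.commute)
  qed
  have "real (2 ^ n) \<le> real (c * V)" "real (V * 3 ^ (n - m)) \<le> real (4 ^ n)"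
    using cover volume by (simp_all only: of_nat_le_iff)
  then have "(2::real) ^ n \<le> real c * real V" "real V * 3 ^ (n - m) \<le> 4 ^ n"
    by simp_all
  then have "((2::real) ^ n) ^ 4 * 27 ^ n \<le> (real c * real V) ^ 4 * (3 ^ (n - m)) ^ 4"
    using \<open>(27::real) ^ n \<le> (3 ^ (n - m)) ^ 4\<close> by (intro mult_mono power_mono) auto
  also have "\<dots> = real c ^ 4 * (real V * 3 ^ (n - m)) ^ 4"
    by (simp add: power_mult_distrib)
  also have "\<dots> \<le> real c ^ 4 * (4 ^ n) ^ 4"
    using \<open>real V * 3 ^ (n - m) \<le> 4 ^ n\<close> by (intro mult_left_mono power_mono) auto
  finally have "((2::real) ^ n) ^ 4 * 27 ^ n \<le> real c ^ 4 * (4 ^ n) ^ 4" .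
  moreover have "((2::real) ^ n) ^ 4 = (2 ^ 4) ^ n" "((4::real) ^ n) ^ 4 = (4 ^ 4) ^ n"
    by (simp_all only: power_mult[symmetric] mult.commute)
  moreover have "(256::real) ^ n = 16 ^ n * 16 ^ n"
    by (simp flip: power_mult_distrib)
  ultimately have "16 ^ n * 27 ^ n \<le> 16 ^ n * (real c ^ 4 * 16 ^ n)"
    by (simp add: mult_ac)
  then have "(27 / 16) ^ n \<le> real c ^ 4"
    by (simp add: power_divide pos_divide_le_eq)
  then have "(exp (real n / 8)) ^ 4 \<le> real c ^ 4"
    using exp_div_8_pow_4_le[of n] by linarith
  then show ?thesis
    by (simp add: power_mono_iff)
qed

lemma gilbert_varshamov:
  fixes A :: "'a set"
  assumes A: "finite A" "card A = n" and "1 \<le> n"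
  obtains C where "C \<subseteq> Pow A" "hamming_separated ((n - 1) div 4) C" "exp (real n / 8) \<le> real (card C)"
proof -
  define m where "m = (n - 1) div 4"
  obtain C where C: "C \<subseteq> Pow A" "hamming_separated m C"
    and cover: "Pow A \<subseteq> (\<Union>S\<in>C. hamming_ball A S m)"
    using ex_hamming_separated_covering[OF A(1)] by blast
  have "finite C"
    using C A by (auto intro: finite_subset)
  define V where "V = card {U. U \<subseteq> A \<and> card U \<le> m}"
  have "2 ^ n = card (Pow A)"
    using A by (simp add: card_Pow)
  also have "\<dots> \<le> card (\<Union>S\<in>C. hamming_ball A S m)"
    using cover A by (intro card_mono) (auto simp: hamming_ball_def intro: finite_subset[of _ "Pow A"])
  also have "\<dots> \<le> (\<Sum>S\<in>C. card (hamming_ball A S m))"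
    using \<open>finite C\<close> by (rule card_UN_le)
  also have "\<dots> \<le> (\<Sum>S\<in>C. V)"
    using C A unfolding V_def by (intro sum_mono card_hamming_ball_le) auto
  also have "\<dots> = card C * V"
    by simp
  finally have "2 ^ n \<le> card C * V" .
  moreover have "4 * m < n" "V * 3 ^ (n - m) \<le> 4 ^ n"
    using assms unfolding m_def V_def by (auto intro!: card_small_subsets_mult_pow_le)
  ultimately show ?thesis
    using that C exp_div_8_le_of_covering unfolding m_def by blast
qed

definition cube_vertex :: "nat \<Rightarrow> real \<Rightarrow> real \<Rightarrow> nat set \<Rightarrow> nat \<Rightarrow> real" where
  "cube_vertex d \<Delta> \<epsilon> S j = (if j = 1 then \<Delta> else if j \<in> {2..d} then (if j \<in> S then \<epsilon> else - \<epsilon>) else 0)"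

lemma cube_vertex_in_cube_set: "1 \<le> d \<Longrightarrow> cube_vertex d \<Delta> \<epsilon> S \<in> cube_set d \<Delta> \<epsilon>"
  by (auto simp: cube_vertex_def cube_set_def)

lemma inj_on_cube_vertex:
  assumes "\<epsilon> \<noteq> 0"
  shows "inj_on (cube_vertex d \<Delta> \<epsilon>) (Pow {2..d})"
proof (rule inj_onI)
  fix S T assume "S \<in> Pow {2..d}" "T \<in> Pow {2..d}" and eq: "cube_vertex d \<Delta> \<epsilon> S = cube_vertex d \<Delta> \<epsilon> T"
  have "j \<in> S \<longleftrightarrow> j \<in> T" if "j \<in> {2..d}" for j
    using fun_cong[OF eq, of j] that assms by (auto simp: cube_vertex_def split: if_splits)
  then show "S = T"
    using \<open>S \<in> Pow {2..d}\<close> \<open>T \<in> Pow {2..d}\<close> by blast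
qed

lemma sum_atLeastAtMost_split_first:
  fixes f :: "nat \<Rightarrow> real"
  assumes "1 \<le> d"
  shows "(\<Sum>j=1..d. f j) = f 1 + (\<Sum>j=2..d. f j)"
  using assms by (simp add: sum.atLeast_Suc_atMost numeral_2_eq_2)

lemma sqnorm_cube_vertex:
  assumes "1 \<le> d"
  shows "sqnorm d (cube_vertex d \<Delta> \<epsilon> S) = \<Delta>\<^sup>2 + real (d - 1) * \<epsilon>\<^sup>2"
proof -
  have "sqnorm d (cube_vertex d \<Delta> \<epsilon> S) = \<Delta>\<^sup>2 + (\<Sum>j=2..d. (cube_vertex d \<Delta> \<epsilon> S j)\<^sup>2)"
    unfolding sqnorm_def sum_atLeastAtMost_split_first[OF assms] by (simp add: cube_vertex_def)
  also have "(\<Sum>j=2..d. (cube_vertex d \<Delta> \<epsilon> S j)\<^sup>2) = (\<Sum>j=2..d. \<epsilon>\<^sup>2)"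
    by (intro sum.cong) (auto simp: cube_vertex_def)
  finally show ?thesis
    using assms by simp
qed

lemma sum_square_diff_cube_vertex:
  assumes "1 \<le> d" "S \<subseteq> {2..d}" "T \<subseteq> {2..d}"
  shows "(\<Sum>j=1..d. (cube_vertex d \<Delta> \<epsilon> S j - cube_vertex d \<Delta> \<epsilon> T j)\<^sup>2) = 4 * \<epsilon>\<^sup>2 * real (card (sym_diff S T))"
proof -
  have "(\<Sum>j=1..d. (cube_vertex d \<Delta> \<epsilon> S j - cube_vertex d \<Delta> \<epsilon> T j)\<^sup>2)
      = (\<Sum>j=2..d. (cube_vertex d \<Delta> \<epsilon> S j - cube_vertex d \<Delta> \<epsilon> T j)\<^sup>2)"
    unfolding sum_atLeastAtMost_split_first[OF assms(1)] by (simp add: cube_vertex_def)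
  also have "\<dots> = (\<Sum>j\<in>{2..d}. if j \<in> sym_diff S T then 4 * \<epsilon>\<^sup>2 else 0)"
    by (intro sum.cong) (auto simp: cube_vertex_def power2_eq_square)
  also have "\<dots> = (\<Sum>j\<in>{2..d} \<inter> sym_diff S T. 4 * \<epsilon>\<^sup>2)"
    by (rule sum.inter_restrict[symmetric]) simp
  also have "{2..d} \<inter> sym_diff S T = sym_diff S T"
    using assms by auto
  finally show ?thesis
    by simp
qed

lemma L1_Q0_dist_cube_vertex_ge:
  assumes ONB: "ONB_01 \<phi>" and W: "wiener_integral M I"
    and d: "2 \<le> d" and "\<epsilon> > 0" and \<Delta>: "\<Delta> \<ge> sqrt (real d) * \<epsilon>"
    and ST: "S \<subseteq> {2..d}" "T \<subseteq> {2..d}" and far: "real (d - 1) \<le> 4 * real (card (sym_diff S T))"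
  shows "L1_Q0_dist M \<phi> d I (cube_vertex d \<Delta> \<epsilon> S) (cube_vertex d \<Delta> \<epsilon> T)
           \<ge> sqrt (real d - 1) * \<epsilon> / (4 * pi * \<Delta>) * exp (- (\<Delta>\<^sup>2))"
proof -
  define k where "k = real (d - 1) * \<epsilon>\<^sup>2"
  define \<delta>2 where "\<delta>2 = 4 * \<epsilon>\<^sup>2 * real (card (sym_diff S T))"
  have "0 < sqrt (real d) * \<epsilon>"
    using d \<open>\<epsilon> > 0\<close> by simp
  then have "\<Delta> > 0"
    using \<Delta> by linarith
  have "k > 0"
    using d \<open>\<epsilon> > 0\<close> by (simp add: k_def)
  have "real d * \<epsilon>\<^sup>2 \<le> \<Delta>\<^sup>2"
    using power_mono[OF \<Delta>, of 2] \<open>\<epsilon> > 0\<close> by (simp add: power_mult_distrib)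
  moreover have "k \<le> real d * \<epsilon>\<^sup>2"
    unfolding k_def by (intro mult_right_mono) auto
  ultimately have "k \<le> \<Delta>\<^sup>2"
    by linarith
  have "card (sym_diff S T) \<le> d - 1"
    using ST card_mono[of "{2..d}" "sym_diff S T"] by auto
  then have "k \<le> \<delta>2" "\<delta>2 \<le> 4 * k"
    using far \<open>\<epsilon> > 0\<close> by (simp_all add: k_def \<delta>2_def)
  have "0 < \<Delta>\<^sup>2"
    using \<open>\<Delta> > 0\<close> by simp
  then have "4 * (\<Delta>\<^sup>2 + k) - \<delta>2 > 0"
    using \<open>\<delta>2 \<le> 4 * k\<close> unfolding distrib_left by linarith
  have "sqrt k / (4 * pi * \<Delta>) * exp (- (\<Delta>\<^sup>2))
      \<le> (1 - 1 / sqrt (2 * pi)) * (sqrt \<delta>2 / sqrt (4 * (\<Delta>\<^sup>2 + k) - \<delta>2))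
         * std_normal_density ((\<Delta>\<^sup>2 + k + sqrt \<delta>2 / 2) / sqrt (4 * (\<Delta>\<^sup>2 + k) - \<delta>2))"
    by (rule window_bound_ge_separation) fact+
  also have "\<dots> \<le> L1_Q0_dist M \<phi> d I (cube_vertex d \<Delta> \<epsilon> S) (cube_vertex d \<Delta> \<epsilon> T)"
  proof (rule order.trans[OF std_normal_window_product_ge L1_Q0_dist_ge_std_normal_product[OF ONB W]])
    show "sqnorm d (cube_vertex d \<Delta> \<epsilon> S) = \<Delta>\<^sup>2 + k" "sqnorm d (cube_vertex d \<Delta> \<epsilon> T) = \<Delta>\<^sup>2 + k"
      using d by (simp_all add: sqnorm_cube_vertex k_def)
    show "(\<Sum>j=1..d. (cube_vertex d \<Delta> \<epsilon> S j - cube_vertex d \<Delta> \<epsilon> T j)\<^sup>2) = \<delta>2"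
      unfolding \<delta>2_def using d ST by (intro sum_square_diff_cube_vertex) auto
    show "\<delta>2 > 0"
      using \<open>k > 0\<close> \<open>k \<le> \<delta>2\<close> by linarith
  qed (use \<open>k > 0\<close> \<open>k \<le> \<delta>2\<close> \<open>4 * (\<Delta>\<^sup>2 + k) - \<delta>2 > 0\<close> in auto)
  finally show ?thesis
    using d \<open>\<epsilon> > 0\<close> by (simp add: k_def real_sqrt_mult of_nat_diff)
qed

lemma two_le_exp_div_8:
  assumes "7 \<le> d"
  shows "2 \<le> exp ((real d - 1) / 8)"
proof -
  have "2 \<le> exp (3/4 :: real)"
    using exp_lower_Taylor_quadratic[of "3/4 :: real"] by (simp add: power2_eq_square)
  also have "\<dots> \<le> exp ((real d - 1) / 8)"
    using assms by simp
  finally show ?thesis .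
qed

lemma ex_separated_cube_code:
  assumes "2 \<le> d"
  obtains C where "C \<subseteq> Pow {2..d}" "exp (real (d - 1) / 8) \<le> real (card C)"
    and "\<And>S T. S \<in> C \<Longrightarrow> T \<in> C \<Longrightarrow> S \<noteq> T \<Longrightarrow> real (d - 1) \<le> 4 * real (card (sym_diff S T))"
proof -
  obtain C where C: "C \<subseteq> Pow {2..d}" "hamming_separated ((d - 1 - 1) div 4) C"
    and card_C: "exp (real (d - 1) / 8) \<le> real (card C)"
    by (rule gilbert_varshamov[of "{2..d}" "d - 1"]) (use assms in auto)
  have far: "real (d - 1) \<le> 4 * real (card (sym_diff S T))" if "S \<in> C" "T \<in> C" "S \<noteq> T" for S T
  proof -
    have "(d - 1 - 1) div 4 < card (sym_diff S T)"
      using C(2) that by (simp add: hamming_separated_def)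
    then have "d - 1 \<le> 4 * card (sym_diff S T)"
      by presburger
    then have "real (d - 1) \<le> real (4 * card (sym_diff S T))"
      by (simp only: of_nat_le_iff)
    then show ?thesis
      by simp
  qed
  show ?thesis
    by (rule that[OF C(1) card_C far])
qed

theorem lemma3:
  fixes M :: "'a measure" and I :: "(real \<Rightarrow> real) \<Rightarrow> 'a \<Rightarrow> real"
    and \<phi> :: "nat \<Rightarrow> real \<Rightarrow> real" and d :: nat and \<epsilon> \<Delta> :: real
  assumes "ONB_01 \<phi>" and "wiener_integral M I"
    and "d \<ge> 7" and "\<epsilon> > 0" and "\<Delta> \<ge> sqrt (real d) * \<epsilon>"
  shows "\<exists>\<Theta>. \<Theta> \<subseteq> cube_set d \<Delta> \<epsilon> \<and> finite \<Theta> \<and>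
           real (card \<Theta>) \<ge> exp ((real d - 1) / 8) \<and> exp ((real d - 1) / 8) \<ge> 2 \<and>
           (\<forall>\<theta>\<in>\<Theta>. \<forall>\<theta>'\<in>\<Theta>. \<theta> \<noteq> \<theta>' \<longrightarrow>
              L1_Q0_dist M \<phi> d I \<theta> \<theta>' \<ge>
                sqrt (real d - 1) * \<epsilon> / (4 * pi * \<Delta>) * exp (- (\<Delta>\<^sup>2)))"
proof -
  obtain C where C: "C \<subseteq> Pow {2..d}" and card_C: "exp (real (d - 1) / 8) \<le> real (card C)"
    and far: "\<And>S T. S \<in> C \<Longrightarrow> T \<in> C \<Longrightarrow> S \<noteq> T \<Longrightarrow> real (d - 1) \<le> 4 * real (card (sym_diff S T))"
    using ex_separated_cube_code[of d] \<open>d \<ge> 7\<close> by auto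
  have inj: "inj_on (cube_vertex d \<Delta> \<epsilon>) C"
    using inj_on_cube_vertex[of \<epsilon> d \<Delta>] C \<open>\<epsilon> > 0\<close> by (auto intro: inj_on_subset)
  show ?thesis
  proof (intro exI[of _ "cube_vertex d \<Delta> \<epsilon> ` C"] conjI ballI impI)
    show "cube_vertex d \<Delta> \<epsilon> ` C \<subseteq> cube_set d \<Delta> \<epsilon>" "finite (cube_vertex d \<Delta> \<epsilon> ` C)"
      using C \<open>d \<ge> 7\<close> by (auto intro: cube_vertex_in_cube_set finite_subset)
    show "exp ((real d - 1) / 8) \<le> real (card (cube_vertex d \<Delta> \<epsilon> ` C))"
      using card_C \<open>d \<ge> 7\<close> by (simp add: card_image[OF inj] of_nat_diff)
    show "2 \<le> exp ((real d - 1) / 8)"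
      using \<open>d \<ge> 7\<close> by (rule two_le_exp_div_8)
    fix \<theta> \<theta>' assume "\<theta> \<in> cube_vertex d \<Delta> \<epsilon> ` C" "\<theta>' \<in> cube_vertex d \<Delta> \<epsilon> ` C" "\<theta> \<noteq> \<theta>'"
    then obtain S T where ST: "S \<in> C" "T \<in> C" "S \<noteq> T"
      and \<theta>: "\<theta> = cube_vertex d \<Delta> \<epsilon> S" "\<theta>' = cube_vertex d \<Delta> \<epsilon> T"
      by blast
    show "L1_Q0_dist M \<phi> d I \<theta> \<theta>' \<ge> sqrt (real d - 1) * \<epsilon> / (4 * pi * \<Delta>) * exp (- (\<Delta>\<^sup>2))"
      unfolding \<theta> using C ST \<open>d \<ge> 7\<close> far[OF ST]
      by (intro L1_Q0_dist_cube_vertex_ge[OF assms(1,2) _ assms(4,5)]) auto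
  qed
qed

end
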